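(* Let $\gamma:[0,\infty)\to[0,\infty)$, $t\mapsto\gamma_t$, be monotonically decreasing, $\Gamma(t)=\int_0^t\gamma_s\,ds$, and let $\mathcal K:[0,\infty)\to[0,\infty)$ be monotonically decreasing with $\|\mathcal K\|_1<\infty$, $F:[0,\infty)\to[0,\infty)$, and $R:[0,\infty)\to[0,\infty)$ satisfy \[ R(t)=F(\Gamma(t))+\int_0^t\gamma_s^2\mathcal K(\Gamma(t)-\Gamma(s))R(s)\,ds. \] Then for all $t$, \[ R(t)\ge F(\Gamma(t))+\int_0^t\gamma_s^2\mathcal K(\Gamma(t)-\Gamma(s))F(\Gamma(s))\,ds. \] If in addition there exist $\epsilon>0$ and $T>0$ such that for all $t>T$, $\int_0^t\mathcal K(s)\mathcal K(t-s)\,ds\le2(1+\epsilon)\|\mathcal K\|_1\mathcal K(t)$, and $2\|\mathcal K\|_1(1+\epsilon)\gamma_0<1$, then for all $t$, \[ R(t)\le F(\Gamma(t))+C\int_0^t\gamma_s^2\mathcal K(\Gamma(t)-\Gamma(s))F(\Gamma(s))\,ds,\qquad C=\Big(\frac{\mathcal K(0)}{\mathcal K(T)(2\epsilon+1)}+2\Big)\frac{1}{1-2\gamma_0\|\mathcal K\|_1(1+\epsilon)}. \]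
   Context: $\|\mathcal K\|_1=\int_0^\infty\mathcal K(x)\,dx$. In the paper's application, $F(x)=\frac1{2d}\sum_i\lambda_iD_i^2(0)e^{-2\lambda_ix}$ and $\mathcal K(x)=\frac1d\sum_i\lambda_i^2e^{-2\lambda_ix}$ for the eigenvalues $\lambda_i\ge0$ of a covariance matrix, so all functions involved are nonnegative. *)

theory Defs
  imports "HOL-Analysis.Analysis"
begin

end

theory Submission
  imports Defs
begin

(*
  The lower bound holds because R >= F o Gamma inside the memory integral.

  For the upper bound write R = F o Gamma + S with S the memory integral, let L = ||K||_1,
  E = gamma_0 L K(0) / (1 - gamma_0 L) and psi = min (C K, K + E). Then psi is a supersolution
  for the kernel gamma_0 K:  gamma_0 int_0^x psi(x - w) K(w) dw <= psi(x) - K(x).  For x > T this is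
  the convolution hypothesis, for x <= T it follows from E <= (C - 1) K(T). Since gamma is
  decreasing, the substitution w = Gamma u - Gamma s turns it into the column bound
    int_s^t gamma_u^2 psi(Gamma t - Gamma u) K(Gamma u - Gamma s) du <= (psi - K)(Gamma t - Gamma s).
  Integrating the equation at time u against gamma_u^2 psi(Gamma t - Gamma u) over [0, t] and
  exchanging the order of integration in the memory term gives
    P + S(t) <= C int_0^t gamma_s^2 K(Gamma t - Gamma s) F(Gamma s) ds + P
  with P = int_0^t gamma_s^2 (psi - K)(Gamma t - Gamma s) R(s) ds <= (C - 1) S(t) < oo.

  Neither R nor F o Gamma is assumed measurable; the convolution hypothesis forces K > 0, so
  gamma^2 R is the integrand of the equation divided by a positive Borel function.
*)

section \<open>Antitone functions and substitution\<close>

lemma integrable_on_bounded_borel: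
  fixes f :: "real \<Rightarrow> real"
  assumes "f \<in> borel_measurable borel" and "\<And>x. x \<in> {a..b} \<Longrightarrow> \<bar>f x\<bar> \<le> B"
  shows "f integrable_on {a..b}"
proof (rule measurable_bounded_by_integrable_imp_integrable[where g = "\<lambda>_. B"])
  show "f \<in> borel_measurable (lebesgue_on {a..b})"
    using assms(1) by (simp add: measurable_completion measurable_restrict_space1)
qed (use assms(2) in auto)

lemma borel_measurable_antimono:
  fixes f :: "real \<Rightarrow> real"
  assumes "antimono f"
  shows "f \<in> borel_measurable borel"
proof -
  have "mono (\<lambda>x. - f x)"
    using assms by (auto simp: mono_def antimono_def)
  then have "(\<lambda>x. - (- f x)) \<in> borel_measurable borel"
    by (intro borel_measurable_uminus borel_measurable_mono)
  then show ?thesis by simp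
qed

lemma antimono_max_0:
  fixes f :: "real \<Rightarrow> real"
  assumes "antimono_on {0..} f"
  shows "antimono (\<lambda>x. f (max x 0))"
  using assms by (auto simp: monotone_on_def antimono_def)

lemma convolution_ge_antimono:
  fixes K :: "real \<Rightarrow> real"
  assumes K_decr: "antimono_on {0..} K" and K_nonneg: "\<And>x. 0 \<le> x \<Longrightarrow> 0 \<le> K x"
    and ab: "0 \<le> a" "a \<le> b"
  shows "(b - a) * (K b)\<^sup>2 \<le> integral {0..a + b} (\<lambda>s. K s * K (a + b - s))"
proof -
  define Ke where "Ke x = K (max x 0)" for x
  have Ke_decr: "antimono Ke"
    unfolding Ke_def by (rule antimono_max_0[OF K_decr])
  have [measurable]: "Ke \<in> borel_measurable borel"
    by (rule borel_measurable_antimono[OF Ke_decr])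
  have Ke_bounds: "0 \<le> Ke x" "Ke x \<le> K 0" for x
    using K_nonneg K_decr by (auto simp: Ke_def monotone_on_def)
  have "(\<lambda>s. Ke s * Ke (a + b - s)) integrable_on {0..a + b}"
    by (rule integrable_on_bounded_borel[where B = "K 0 * K 0"])
       (use Ke_bounds K_nonneg[of 0] in \<open>auto simp: abs_mult intro!: mult_mono\<close>)
  then have int: "(\<lambda>s. K s * K (a + b - s)) integrable_on {0..a + b}"
    by (rule integrable_spike[where S = "{}"]) (auto simp: Ke_def)
  have sub: "{a..b} \<subseteq> {0..a + b}"
    using ab by auto
  have "integral {a..b} (\<lambda>_. (K b)\<^sup>2) \<le> integral {a..b} (\<lambda>s. K s * K (a + b - s))"
  proof (rule integral_le)
    show "(\<lambda>s. K s * K (a + b - s)) integrable_on {a..b}"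
      by (rule integrable_on_subinterval[OF int sub])
  next
    fix s assume s: "s \<in> {a..b}"
    have "K b \<le> K s" "K b \<le> K (a + b - s)"
      using s ab K_decr by (auto simp: monotone_on_def)
    then show "(K b)\<^sup>2 \<le> K s * K (a + b - s)"
      using K_nonneg[of b] ab by (simp add: power2_eq_square mult_mono)
  qed (rule Henstock_Kurzweil_Integration.integrable_const_ivl)
  also have "\<dots> \<le> integral {0..a + b} (\<lambda>s. K s * K (a + b - s))"
    by (rule integral_subset_le[OF sub integrable_on_subinterval[OF int sub] int])
       (use K_nonneg in auto)
  finally show ?thesis
    using ab by simp
qed

lemma antimono_vanishing_threshold:
  fixes K :: "real \<Rightarrow> real"
  assumes K_decr: "antimono_on {0..} K" and K_nonneg: "\<And>x. 0 \<le> x \<Longrightarrow> 0 \<le> K x"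
    and T: "0 \<le> T" "K T > 0" and x: "0 \<le> x" "K x = 0"
  obtains z where "T \<le> z" "\<And>y. 0 \<le> y \<Longrightarrow> y < z \<Longrightarrow> K y > 0" "\<And>y. z < y \<Longrightarrow> K y = 0"
proof -
  have K_le: "K v \<le> K u" if "0 \<le> u" "u \<le> v" for u v
    using K_decr that by (auto simp: monotone_on_def)
  define P where "P = {y \<in> {0..x}. K y > 0}"
  define z where "z = Sup P"
  have "T \<in> P"
    using T x K_le[of x T] by (fastforce simp: P_def)
  moreover have bdd: "bdd_above P"
    by (auto simp: P_def bdd_above_def)
  ultimately have Tz: "T \<le> z"
    unfolding z_def by (rule cSup_upper)
  have "K y > 0" if y: "0 \<le> y" "y < z" for y
  proof -
    obtain p where "p \<in> P" "y < p"
      using less_cSupD[of P y] \<open>T \<in> P\<close> y(2) unfolding z_def by blast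
    then show ?thesis
      using K_le[of y p] y(1) by (auto simp: P_def)
  qed
  moreover have "K y = 0" if "z < y" for y
  proof (cases "y \<le> x")
    case True
    then have "y \<notin> P"
      using that cSup_upper[OF _ bdd, of y] unfolding z_def by auto
    then show ?thesis
      using True that Tz T K_nonneg[of y] by (force simp: P_def)
  next
    case False
    then show ?thesis
      using K_le[of x y] K_nonneg[of y] x by auto
  qed
  ultimately show thesis
    using Tz that by blast
qed

lemma antimono_pos_if_convolution_bound:
  fixes K :: "real \<Rightarrow> real"
  assumes K_decr: "antimono_on {0..} K" and K_nonneg: "\<And>x. 0 \<le> x \<Longrightarrow> 0 \<le> K x"
    and T: "T > 0" "K T > 0"
    and conv: "\<And>t. t > T \<Longrightarrow> integral {0..t} (\<lambda>s. K s * K (t - s)) \<le> c * K t"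
    and x: "0 \<le> x"
  shows "K x > 0"
proof (rule ccontr)
  assume "\<not> K x > 0"
  then have "K x = 0"
    using K_nonneg[OF x] by linarith
  then obtain z where Tz: "T \<le> z" and pos_below: "\<And>y. 0 \<le> y \<Longrightarrow> y < z \<Longrightarrow> K y > 0"
    and zero_above: "\<And>y. z < y \<Longrightarrow> K y = 0"
    using antimono_vanishing_threshold[OF K_decr K_nonneg less_imp_le[OF T(1)] T(2) x] by blast
  \<comment> \<open>At \<open>t = 3z/2\<close> the kernel vanishes, but its self-convolution does not.\<close>
  have "(7 * z / 8 - 5 * z / 8) * (K (7 * z / 8))\<^sup>2 \<le>
      integral {0..5 * z / 8 + 7 * z / 8} (\<lambda>s. K s * K (5 * z / 8 + 7 * z / 8 - s))"
    using T Tz by (intro convolution_ge_antimono[OF K_decr K_nonneg]) auto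
  also have "\<dots> \<le> c * K (5 * z / 8 + 7 * z / 8)"
    using T Tz by (intro conv) auto
  also have "\<dots> = 0"
    using T Tz by (simp add: zero_above)
  finally show False
    using pos_below[of "7 * z / 8"] T Tz by (simp add: mult_le_0_iff)
qed

lemma antimono_integrable_on:
  fixes g :: "real \<Rightarrow> real"
  assumes "antimono g" and "\<And>x. 0 \<le> g x"
  shows "g integrable_on {a..b}"
  by (rule integrable_on_bounded_borel[OF borel_measurable_antimono[OF assms(1)], where B = "g a"])
     (use assms in \<open>auto simp: antimono_def\<close>)

lemma integral_antimono_less:
  fixes g :: "real \<Rightarrow> real"
  assumes g_decr: "antimono g" and g_nonneg: "\<And>x. 0 \<le> g x"
    and "s \<le> u" "u < v" "g v > 0"
  shows "integral {s..u} g < integral {s..v} g"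
proof -
  have "integral {u..v} (\<lambda>_. g v) \<le> integral {u..v} g"
    using g_decr by (intro integral_le antimono_integrable_on[OF assms(1,2)]) (auto simp: antimono_def)
  then have "g v * (v - u) \<le> integral {u..v} g"
    using assms(4) by (simp add: mult.commute)
  moreover have "integral {s..v} g = integral {s..u} g + integral {u..v} g"
    using Henstock_Kurzweil_Integration.integral_combine[OF _ _ antimono_integrable_on[OF assms(1,2)]]
      assms(3,4) by simp
  ultimately show ?thesis
    using assms(4,5) by (smt (verit) mult_pos_pos)
qed

lemma mono_integral_from:
  fixes g :: "real \<Rightarrow> real"
  assumes "antimono g" and "\<And>x. 0 \<le> g x"
  shows "mono (\<lambda>u. integral {s..u} g)"
proof (rule monoI)
  fix u v :: real assume "u \<le> v"
  then show "integral {s..u} g \<le> integral {s..v} g"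
    using assms by (intro integral_subset_le antimono_integrable_on) auto
qed

lemma antimono_discontinuities_null:
  fixes g :: "real \<Rightarrow> real"
  assumes "antimono g"
  shows "{u. \<not> isCont g u} \<in> null_sets lebesgue"
proof -
  have "mono (\<lambda>x. - g x)"
    using assms by (auto simp: mono_def antimono_def)
  then have "countable {u. \<not> isCont (\<lambda>x. - g x) u}"
    by (rule mono_ctble_discont)
  moreover have "isCont (\<lambda>x. - g x) u \<longleftrightarrow> isCont g u" for u
    using continuous_minus[of "at u" "\<lambda>x. - g x"] continuous_minus[of "at u" g] by auto
  ultimately show ?thesis
    by (intro null_sets_completionI countable_imp_null_set_lborel) simp
qed

lemma integral_from_has_field_derivative:
  fixes g :: "real \<Rightarrow> real"
  assumes "antimono g" and "\<And>x. 0 \<le> g x" and "S \<subseteq> {s..t}" "u \<in> S" "isCont g u"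
  shows "((\<lambda>u. integral {s..u} g) has_field_derivative g u) (at u within S)"
proof -
  have "((\<lambda>u. integral {s..u} g) has_vector_derivative g u) (at u within {s..t} - {})"
    using assms(3-5) continuous_at_imp_continuous_at_within
    by (intro integral_has_vector_derivative_continuous_at antimono_integrable_on[OF assms(1,2)]) auto
  then show ?thesis
    using assms(3) by (auto simp: has_real_derivative_iff_has_vector_derivative intro: has_vector_derivative_within_subset)
qed

lemma inj_on_integral_from:
  fixes g :: "real \<Rightarrow> real"
  assumes "antimono g" and "\<And>x. 0 \<le> g x"
  shows "inj_on (\<lambda>u. integral {s..u} g) {u. s \<le> u \<and> 0 < g u}"
proof (rule linorder_inj_onI)
  fix u v assume "u < v" "u \<in> {u. s \<le> u \<and> 0 < g u}" "v \<in> {u. s \<le> u \<and> 0 < g u}"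
  then show "integral {s..u} g \<noteq> integral {s..v} g"
    using integral_antimono_less[OF assms, of s u v] by auto
qed auto

lemma integral_antimono_weighted_continuity_points:
  fixes g f :: "real \<Rightarrow> real"
  assumes "antimono g" and "\<And>x. 0 \<le> g x"
  shows "integral {s..t} (\<lambda>u. g u * f u) = integral {u \<in> {s..t}. 0 < g u \<and> isCont g u} (\<lambda>u. g u * f u)"
proof -
  define S where "S = {u \<in> {s..t}. 0 < g u \<and> isCont g u}"
  have "integral {s..t} (\<lambda>u. g u * f u) = integral {s..t} (\<lambda>u. if u \<in> S then g u * f u else 0)"
  proof (rule integral_spike[where S = "{u. \<not> isCont g u}"])
    show "negligible {u. \<not> isCont g u}"
      using antimono_discontinuities_null[OF assms(1)] by (simp add: negligible_iff_null_sets)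
  next
    fix u assume "u \<in> {s..t} - {u. \<not> isCont g u}"
    then show "(if u \<in> S then g u * f u else 0) = g u * f u"
      using assms(2)[of u] by (auto simp: S_def)
  qed
  also have "\<dots> = integral (S \<inter> {s..t}) (\<lambda>u. g u * f u)"
    by (rule integral_restrict_Int)
  also have "S \<inter> {s..t} = S"
    by (auto simp: S_def)
  finally show ?thesis
    unfolding S_def .
qed

lemma integral_antimono_substitution_continuity_points:
  fixes g \<phi> :: "real \<Rightarrow> real" and s t :: real
  assumes g_decr: "antimono g" and g_nonneg: "\<And>x. 0 \<le> g x"
    and [measurable]: "\<phi> \<in> borel_measurable borel" and \<phi>_nonneg: "\<And>x. 0 \<le> \<phi> x" and \<phi>_le: "\<And>x. \<phi> x \<le> B"
  defines "S \<equiv> {u \<in> {s..t}. 0 < g u \<and> isCont g u}"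
  shows "\<phi> absolutely_integrable_on (\<lambda>u. integral {s..u} g) ` S"
    and "integral ((\<lambda>u. integral {s..u} g) ` S) \<phi> = integral S (\<lambda>u. g u * \<phi> (integral {s..u} g))"
proof -
  define G where "G u = integral {s..u} g" for u
  have [measurable]: "G \<in> borel_measurable borel" "g \<in> borel_measurable borel"
    unfolding G_def by (rule borel_measurable_mono[OF mono_integral_from[OF g_decr g_nonneg]])
      (rule borel_measurable_antimono[OF g_decr])
  have S_sub: "S \<subseteq> {s..t}"
    by (auto simp: S_def)
  have "{u \<in> {s..t}. 0 < g u} \<in> sets lebesgue"
    by (rule sets_completionI_sets) measurable
  moreover have "S = {u \<in> {s..t}. 0 < g u} - {u. \<not> isCont g u}"
    by (auto simp: S_def)
  ultimately have S_meas: "S \<in> sets lebesgue"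
    using antimono_discontinuities_null[OF g_decr] by auto
  have G_deriv: "(G has_field_derivative g u) (at u within S)" if "u \<in> S" for u
    unfolding G_def[abs_def] using that S_sub
    by (intro integral_from_has_field_derivative[OF g_decr g_nonneg]) (auto simp: S_def)
  have G_inj: "inj_on G S"
    unfolding G_def[abs_def] using inj_on_integral_from[OF g_decr g_nonneg, of s]
    by (rule inj_on_subset) (auto simp: S_def)
  have "(\<lambda>u. \<bar>g u\<bar> *\<^sub>R \<phi> (G u)) absolutely_integrable_on S"
  proof (rule measurable_bounded_by_integrable_imp_absolutely_integrable[OF _ S_meas])
    show "(\<lambda>u. \<bar>g u\<bar> *\<^sub>R \<phi> (G u)) \<in> borel_measurable (lebesgue_on S)"
      by (simp add: measurable_completion measurable_restrict_space1)
    have "S \<in> lmeasurable"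
      using S_meas S_sub by (intro bounded_set_imp_lmeasurable bounded_subset[OF bounded_closed_interval])
    then show "(\<lambda>_. g s * B) integrable_on S"
      by (rule integrable_on_const)
    show "norm (\<bar>g u\<bar> *\<^sub>R \<phi> (G u)) \<le> g s * B" if "u \<in> S" for u
      using that g_decr g_nonneg \<phi>_nonneg \<phi>_le
      by (auto simp: S_def abs_mult antimono_def intro!: mult_mono)
  qed
  then have "(\<lambda>u. \<bar>g u\<bar> *\<^sub>R \<phi> (G u)) absolutely_integrable_on S \<and>
      integral S (\<lambda>u. \<bar>g u\<bar> *\<^sub>R \<phi> (G u)) = integral S (\<lambda>u. g u * \<phi> (G u))"
    using g_nonneg by simp
  then have "\<phi> absolutely_integrable_on G ` S \<and> integral (G ` S) \<phi> = integral S (\<lambda>u. g u * \<phi> (G u))"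
    using has_absolute_integral_change_of_variables_real[OF S_meas G_deriv G_inj,
        of \<phi> "integral S (\<lambda>u. g u * \<phi> (G u))"] by blast
  then show "\<phi> absolutely_integrable_on G ` S"
    and "integral (G ` S) \<phi> = integral S (\<lambda>u. g u * \<phi> (G u))"
    unfolding G_def by simp_all
qed

lemma integral_antimono_substitution_le:
  fixes g \<phi> :: "real \<Rightarrow> real"
  assumes g_decr: "antimono g" and g_nonneg: "\<And>x. 0 \<le> g x"
    and \<phi>_meas: "\<phi> \<in> borel_measurable borel" and \<phi>_nonneg: "\<And>x. 0 \<le> \<phi> x" and \<phi>_le: "\<And>x. \<phi> x \<le> B"
  shows "(\<lambda>u. g u * \<phi> (integral {s..u} g)) integrable_on {s..t}"
    and "integral {s..t} (\<lambda>u. g u * \<phi> (integral {s..u} g)) \<le> integral {0..integral {s..t} g} \<phi>"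
proof -
  define G where "G u = integral {s..u} g" for u
  define S where "S = {u \<in> {s..t}. 0 < g u \<and> isCont g u}"
  note subst = integral_antimono_substitution_continuity_points[OF assms, where s = s and t = t, folded G_def S_def]
  have G_mono: "mono G"
    unfolding G_def by (rule mono_integral_from[OF g_decr g_nonneg])
  have [measurable]: "(\<lambda>u. g u * \<phi> (G u)) \<in> borel_measurable borel"
    using borel_measurable_mono[OF G_mono] borel_measurable_antimono[OF g_decr] \<phi>_meas by measurable
  have "(\<lambda>u. g u * \<phi> (G u)) integrable_on {s..t}"
    using g_decr g_nonneg \<phi>_nonneg \<phi>_le
    by (intro integrable_on_bounded_borel[where B = "g s * B"])
       (auto simp: abs_mult antimono_def intro!: mult_mono)
  then show "(\<lambda>u. g u * \<phi> (integral {s..u} g)) integrable_on {s..t}"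
    unfolding G_def .
  have "integral {s..t} (\<lambda>u. g u * \<phi> (G u)) = integral (G ` S) \<phi>"
    unfolding S_def subst(2)[unfolded S_def]
    by (rule integral_antimono_weighted_continuity_points[OF g_decr g_nonneg])
  also have "\<dots> \<le> integral {0..G t} \<phi>"
  proof (rule integral_subset_le)
    show "G ` S \<subseteq> {0..G t}"
    proof
      fix y assume "y \<in> G ` S"
      then obtain u where "u \<in> S" "y = G u"
        by blast
      then show "y \<in> {0..G t}"
        using monoD[OF G_mono, of s u] monoD[OF G_mono, of u t] by (auto simp: G_def S_def)
    qed
    show "\<phi> integrable_on G ` S"
      using subst(1) by (simp add: absolutely_integrable_on_def)
    show "\<phi> integrable_on {0..G t}"
      by (rule integrable_on_bounded_borel[OF \<phi>_meas, where B = B]) (use \<phi>_nonneg \<phi>_le in auto)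
  qed (use \<phi>_nonneg in auto)
  finally show "integral {s..t} (\<lambda>u. g u * \<phi> (integral {s..u} g)) \<le> integral {0..integral {s..t} g} \<phi>"
    unfolding G_def .
qed

section \<open>Iterated nonnegative integrals\<close>

lemma sigma_finite_lebesgue: "sigma_finite_measure (lebesgue :: 'a::euclidean_space measure)"
proof -
  interpret lborel: sigma_finite_measure "lborel :: 'a measure"
    by (rule sigma_finite_lborel)
  obtain C :: "'a set set" where C: "countable C" "C \<subseteq> sets lborel" "\<Union>C = UNIV" "\<forall>A\<in>C. emeasure lborel A \<noteq> \<infinity>"
    using lborel.sigma_finite_countable by auto
  show ?thesis
    by unfold_locales (use C in \<open>auto intro!: exI[of _ C]\<close>)
qed

interpretation lebesgue_pair: pair_sigma_finite lebesgue lebesgue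
  by (intro pair_sigma_finite.intro sigma_finite_lebesgue)

lemma (in pair_sigma_finite) nn_integral_kernel_le:
  assumes [measurable]: "(\<lambda>(x, y). k x y) \<in> borel_measurable (M1 \<Otimes>\<^sub>M M2)"
    and [measurable]: "a \<in> borel_measurable M1" "\<rho> \<in> borel_measurable M2"
    and column: "\<And>y. y \<in> space M2 \<Longrightarrow> \<rho> y \<noteq> 0 \<Longrightarrow> (\<integral>\<^sup>+x. a x * k x y \<partial>M1) \<le> b y"
  shows "(\<integral>\<^sup>+x. a x * (\<integral>\<^sup>+y. k x y * \<rho> y \<partial>M2) \<partial>M1) \<le> (\<integral>\<^sup>+y. b y * \<rho> y \<partial>M2)"
proof -
  have "(\<integral>\<^sup>+x. a x * (\<integral>\<^sup>+y. k x y * \<rho> y \<partial>M2) \<partial>M1) = (\<integral>\<^sup>+x. \<integral>\<^sup>+y. a x * k x y * \<rho> y \<partial>M2 \<partial>M1)"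
    by (rule nn_integral_cong) (simp add: nn_integral_cmult[symmetric] mult.assoc)
  also have "\<dots> = (\<integral>\<^sup>+y. \<integral>\<^sup>+x. a x * k x y * \<rho> y \<partial>M1 \<partial>M2)"
    by (rule Fubini'[symmetric]) measurable
  also have "\<dots> = (\<integral>\<^sup>+y. (\<integral>\<^sup>+x. a x * k x y \<partial>M1) * \<rho> y \<partial>M2)"
    by (rule nn_integral_cong) (simp add: nn_integral_multc)
  also have "\<dots> \<le> (\<integral>\<^sup>+y. b y * \<rho> y \<partial>M2)"
  proof (rule nn_integral_mono)
    fix y assume "y \<in> space M2"
    then show "(\<integral>\<^sup>+x. a x * k x y \<partial>M1) * \<rho> y \<le> b y * \<rho> y"
      using column[of y] by (cases "\<rho> y = 0") (auto intro: mult_right_mono)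
  qed
  finally show ?thesis .
qed

lemma nn_integral_lebesgue_indicator_eq_integral:
  fixes f :: "'a::euclidean_space \<Rightarrow> real"
  assumes "f integrable_on A" and "\<And>x. x \<in> A \<Longrightarrow> 0 \<le> f x"
  shows "(\<integral>\<^sup>+x. ennreal (indicator A x * f x) \<partial>lebesgue) = ennreal (integral A f)"
    and "(\<lambda>x. indicator A x * f x) \<in> borel_measurable lebesgue"
proof -
  have eq: "(\<lambda>x. indicator A x * f x) = (\<lambda>x. if x \<in> A then f x else 0)"
    by (auto simp: indicator_def)
  have "((\<lambda>x. indicator A x * f x) has_integral integral A f) UNIV"
    unfolding eq has_integral_restrict_UNIV using assms(1) by (rule integrable_integral)
  moreover have "0 \<le> indicator A x * f x" for x
    using assms(2) by (simp add: indicator_def)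
  ultimately have "(\<lambda>x. indicator A x * f x) \<in> borel_measurable lebesgue \<and>
      integral\<^sup>N lebesgue (\<lambda>x. indicator A x * f x) = integral A f \<and> 0 \<le> integral A f"
    by (subst (asm) has_integral_iff_nn_integral_lebesgue)
  then show "(\<integral>\<^sup>+x. ennreal (indicator A x * f x) \<partial>lebesgue) = ennreal (integral A f)"
    and "(\<lambda>x. indicator A x * f x) \<in> borel_measurable lebesgue"
    by simp_all
qed

lemma lebesgue_measurable_ident [measurable]: "(\<lambda>x. x) \<in> borel_measurable (lebesgue :: 'a::euclidean_space measure)"
  by (simp add: measurable_completion)

section \<open>The equation and the lower bound\<close>

locale volterra_equation =
  fixes \<gamma> K F R :: "real \<Rightarrow> real" and \<Gamma> :: "real \<Rightarrow> real"
  assumes \<gamma>_nonneg: "\<And>t. t \<ge> 0 \<Longrightarrow> \<gamma> t \<ge> 0"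
    and \<gamma>_decr: "antimono_on {0..} \<gamma>"
    and \<Gamma>_def: "\<And>t. \<Gamma> t = integral {0..t} \<gamma>"
    and K_nonneg: "\<And>t. t \<ge> 0 \<Longrightarrow> K t \<ge> 0"
    and K_decr: "antimono_on {0..} K"
    and K_L1: "K integrable_on {0..}"
    and F_nonneg: "\<And>t. t \<ge> 0 \<Longrightarrow> F t \<ge> 0"
    and R_nonneg: "\<And>t. t \<ge> 0 \<Longrightarrow> R t \<ge> 0"
    and R_int: "\<And>t. t \<ge> 0 \<Longrightarrow>
        (\<lambda>s. (\<gamma> s)\<^sup>2 * K (\<Gamma> t - \<Gamma> s) * R s) integrable_on {0..t}"
    and R_eq: "\<And>t. t \<ge> 0 \<Longrightarrow>
        R t = F (\<Gamma> t) + integral {0..t} (\<lambda>s. (\<gamma> s)\<^sup>2 * K (\<Gamma> t - \<Gamma> s) * R s)"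
begin

text \<open>\<open>\<gamma>\<close> and \<open>K\<close> are not assumed measurable; their constant extensions to the negative axis are
  antitone on the whole line, hence Borel.\<close>

definition \<gamma>_ext :: "real \<Rightarrow> real" where "\<gamma>_ext x = \<gamma> (max x 0)"
definition K_ext :: "real \<Rightarrow> real" where "K_ext x = K (max x 0)"

lemma \<gamma>_ext_decr: "antimono \<gamma>_ext"
  unfolding \<gamma>_ext_def[abs_def] by (rule antimono_max_0[OF \<gamma>_decr])

lemma K_ext_decr: "antimono K_ext"
  unfolding K_ext_def[abs_def] by (rule antimono_max_0[OF K_decr])

lemma \<gamma>_ext_measurable [measurable]: "\<gamma>_ext \<in> borel_measurable borel"
  by (rule borel_measurable_antimono[OF \<gamma>_ext_decr])

lemma K_ext_measurable [measurable]: "K_ext \<in> borel_measurable borel"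
  by (rule borel_measurable_antimono[OF K_ext_decr])

lemma \<gamma>_ext_eq: "0 \<le> x \<Longrightarrow> \<gamma>_ext x = \<gamma> x"
  by (simp add: \<gamma>_ext_def)

lemma K_ext_eq: "0 \<le> x \<Longrightarrow> K_ext x = K x"
  by (simp add: K_ext_def)

lemma \<gamma>_ext_bounds: "0 \<le> \<gamma>_ext x" "\<gamma>_ext x \<le> \<gamma> 0"
  using \<gamma>_nonneg \<gamma>_decr by (auto simp: \<gamma>_ext_def monotone_on_def)

lemma K_ext_bounds: "0 \<le> K_ext x" "K_ext x \<le> K 0"
  using K_nonneg K_decr by (auto simp: K_ext_def monotone_on_def)

lemma \<Gamma>_eq_integral_ext: "\<Gamma> t = integral {0..t} \<gamma>_ext"
  unfolding \<Gamma>_def by (rule integral_cong) (simp add: \<gamma>_ext_eq)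

lemma \<Gamma>_mono: "mono \<Gamma>"
  using mono_integral_from[OF \<gamma>_ext_decr \<gamma>_ext_bounds(1)] by (simp add: \<Gamma>_eq_integral_ext[abs_def])

lemma \<Gamma>_measurable [measurable]: "\<Gamma> \<in> borel_measurable borel"
  by (rule borel_measurable_mono[OF \<Gamma>_mono])

lemma \<Gamma>_diff: "0 \<le> s \<Longrightarrow> s \<le> u \<Longrightarrow> \<Gamma> u - \<Gamma> s = integral {s..u} \<gamma>_ext"
  using Henstock_Kurzweil_Integration.integral_combine[OF _ _ antimono_integrable_on[OF \<gamma>_ext_decr \<gamma>_ext_bounds(1)], of 0 s u]
  by (simp add: \<Gamma>_eq_integral_ext)

lemma \<Gamma>_nonneg: "0 \<le> \<Gamma> t"
  unfolding \<Gamma>_eq_integral_ext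
  by (rule integral_nonneg[OF antimono_integrable_on[OF \<gamma>_ext_decr \<gamma>_ext_bounds(1)] \<gamma>_ext_bounds(1)])

lemma \<Gamma>_diff_nonneg: "s \<le> t \<Longrightarrow> 0 \<le> \<Gamma> t - \<Gamma> s"
  using monoD[OF \<Gamma>_mono] by simp

lemma integral_sq_substitution_le:
  assumes st: "0 \<le> s" "s \<le> t"
    and [measurable]: "\<phi> \<in> borel_measurable borel" and \<phi>_nonneg: "\<And>x. 0 \<le> \<phi> x" and \<phi>_le: "\<And>x. \<phi> x \<le> B"
  shows "(\<lambda>u. (\<gamma> u)\<^sup>2 * \<phi> (\<Gamma> u - \<Gamma> s)) integrable_on {s..t}"
    and "integral {s..t} (\<lambda>u. (\<gamma> u)\<^sup>2 * \<phi> (\<Gamma> u - \<Gamma> s)) \<le> \<gamma> 0 * integral {0..\<Gamma> t - \<Gamma> s} \<phi>"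
proof -
  note subst = integral_antimono_substitution_le[OF \<gamma>_ext_decr \<gamma>_ext_bounds(1) assms(3-5), of s t]
  have \<Gamma>_st: "\<Gamma> u - \<Gamma> s = integral {s..u} \<gamma>_ext" if "u \<in> {s..t}" for u
    using that st by (simp add: \<Gamma>_diff)
  have "(\<lambda>u. (\<gamma>_ext u)\<^sup>2 * \<phi> (\<Gamma> u - \<Gamma> s)) integrable_on {s..t}"
    by (rule integrable_on_bounded_borel[where B = "(\<gamma> 0)\<^sup>2 * B"])
       (auto simp: abs_mult \<gamma>_ext_bounds \<phi>_nonneg intro!: mult_mono \<phi>_le power_mono)
  then show int: "(\<lambda>u. (\<gamma> u)\<^sup>2 * \<phi> (\<Gamma> u - \<Gamma> s)) integrable_on {s..t}"
    by (rule integrable_spike[where S = "{}"]) (use st in \<open>auto simp: \<gamma>_ext_eq\<close>)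
  have "integral {s..t} (\<lambda>u. (\<gamma> u)\<^sup>2 * \<phi> (\<Gamma> u - \<Gamma> s))
      \<le> integral {s..t} (\<lambda>u. \<gamma> 0 * (\<gamma>_ext u * \<phi> (integral {s..u} \<gamma>_ext)))"
  proof (rule integral_le[OF int integrable_on_mult_right[OF subst(1)]])
    fix u assume u: "u \<in> {s..t}"
    then have "(\<gamma> u)\<^sup>2 * \<phi> (\<Gamma> u - \<Gamma> s) = \<gamma>_ext u * (\<gamma>_ext u * \<phi> (integral {s..u} \<gamma>_ext))"
      using st by (simp add: \<gamma>_ext_eq \<Gamma>_st power2_eq_square)
    then show "(\<gamma> u)\<^sup>2 * \<phi> (\<Gamma> u - \<Gamma> s) \<le> \<gamma> 0 * (\<gamma>_ext u * \<phi> (integral {s..u} \<gamma>_ext))"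
      by (simp add: mult_right_mono \<gamma>_ext_bounds \<phi>_nonneg)
  qed
  also have "\<dots> \<le> \<gamma> 0 * integral {0..\<Gamma> t - \<Gamma> s} \<phi>"
    using subst(2) \<gamma>_nonneg[of 0] st by (simp add: \<Gamma>_st mult_left_mono)
  finally show "integral {s..t} (\<lambda>u. (\<gamma> u)\<^sup>2 * \<phi> (\<Gamma> u - \<Gamma> s)) \<le> \<gamma> 0 * integral {0..\<Gamma> t - \<Gamma> s} \<phi>" .
qed

definition S :: "real \<Rightarrow> real"
  where "S t = integral {0..t} (\<lambda>s. (\<gamma> s)\<^sup>2 * K (\<Gamma> t - \<Gamma> s) * R s)"

lemma R_eq_S: "0 \<le> t \<Longrightarrow> R t = F (\<Gamma> t) + S t"
  using R_eq by (simp add: S_def)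

lemma S_integrand_nonneg: "0 \<le> s \<Longrightarrow> s \<le> t \<Longrightarrow> 0 \<le> (\<gamma> s)\<^sup>2 * K (\<Gamma> t - \<Gamma> s) * R s"
  using K_nonneg[OF \<Gamma>_diff_nonneg] R_nonneg by simp

lemma S_nonneg: "0 \<le> t \<Longrightarrow> 0 \<le> S t"
  unfolding S_def by (rule integral_nonneg[OF R_int]) (auto intro: S_integrand_nonneg)

lemma R_lower_bound:
  assumes t: "0 \<le> t"
  shows "F (\<Gamma> t) + integral {0..t} (\<lambda>s. (\<gamma> s)\<^sup>2 * K (\<Gamma> t - \<Gamma> s) * F (\<Gamma> s)) \<le> R t"
proof -
  have "integral {0..t} (\<lambda>s. (\<gamma> s)\<^sup>2 * K (\<Gamma> t - \<Gamma> s) * F (\<Gamma> s)) \<le> S t"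
  proof (cases "(\<lambda>s. (\<gamma> s)\<^sup>2 * K (\<Gamma> t - \<Gamma> s) * F (\<Gamma> s)) integrable_on {0..t}")
    case True
    show ?thesis
      unfolding S_def
    proof (rule integral_le[OF True R_int[OF t]])
      fix s assume "s \<in> {0..t}"
      then show "(\<gamma> s)\<^sup>2 * K (\<Gamma> t - \<Gamma> s) * F (\<Gamma> s) \<le> (\<gamma> s)\<^sup>2 * K (\<Gamma> t - \<Gamma> s) * R s"
        using R_eq_S S_nonneg K_nonneg[OF \<Gamma>_diff_nonneg] by (auto intro!: mult_left_mono)
    qed
  next
    case False
    then show ?thesis
      using S_nonneg[OF t] by (simp add: not_integrable_integral)
  qed
  then show ?thesis
    using R_eq_S[OF t] by simp
qed

end

section \<open>The upper bound\<close>

locale volterra_equation_convolution_bound = volterra_equation +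
  fixes \<epsilon> T :: real
  assumes \<epsilon>_pos: "\<epsilon> > 0" and T_pos: "T > 0" and K_T_pos: "K T > 0"
    and K_convolution: "\<And>t. t > T \<Longrightarrow> integral {0..t} (\<lambda>s. K s * K (t - s)) \<le> 2 * (1 + \<epsilon>) * integral {0..} K * K t"
    and gain_lt_1: "2 * integral {0..} K * (1 + \<epsilon>) * \<gamma> 0 < 1"
begin

lemma K_pos: "0 \<le> x \<Longrightarrow> K x > 0"
  using antimono_pos_if_convolution_bound[OF K_decr K_nonneg T_pos K_T_pos K_convolution] .

definition L :: real where "L = integral {0..} K"

definition C :: real
  where "C = (K 0 / (K T * (2 * \<epsilon> + 1)) + 2) * (1 / (1 - 2 * \<gamma> 0 * L * (1 + \<epsilon>)))"

definition E :: real where "E = \<gamma> 0 * L * K 0 / (1 - \<gamma> 0 * L)"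

lemma L_nonneg: "0 \<le> L"
  unfolding L_def by (rule integral_nonneg[OF K_L1]) (auto intro: K_nonneg)

lemma integral_K_le_L: "integral {0..x} K \<le> L"
  unfolding L_def
  by (rule integral_subset_le[OF _ integrable_on_subinterval[OF K_L1] K_L1]) (auto intro: K_nonneg)

lemma gain_bounds: "0 \<le> \<gamma> 0 * L" "2 * (\<gamma> 0 * L) * (1 + \<epsilon>) < 1"
  using \<gamma>_nonneg[of 0] L_nonneg gain_lt_1 by (simp_all add: L_def mult_ac)

lemma C_bounds:
  shows C_ge_1: "1 \<le> C" and C_gain: "C * (2 * (1 + \<epsilon>) * L * \<gamma> 0) \<le> C - 1"
    and K_0_le_C: "K 0 / (2 * \<epsilon> + 1) \<le> (C - 1) * K T"
proof -
  define q where "q = 2 * (\<gamma> 0 * L) * (1 + \<epsilon>)"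
  define c where "c = K 0 / (K T * (2 * \<epsilon> + 1))"
  have q: "0 \<le> q" "q < 1"
    using gain_bounds \<epsilon>_pos by (simp_all add: q_def)
  have c_nonneg: "0 \<le> c"
    using K_nonneg[of 0] K_T_pos \<epsilon>_pos by (simp add: c_def)
  have C_eq: "C * (1 - q) = c + 2"
    using q by (simp add: C_def c_def q_def mult_ac)
  have "1 - q \<le> C * (1 - q)"
    using C_eq c_nonneg q by linarith
  then show C_ge: "1 \<le> C"
    using q by simp
  have "1 \<le> C * (1 - q)"
    using C_eq c_nonneg by linarith
  then show "C * (2 * (1 + \<epsilon>) * L * \<gamma> 0) \<le> C - 1"
    by (simp add: q_def algebra_simps)
  have "0 \<le> C * q"
    using C_ge q by simp
  then have "c * K T \<le> (C - 1) * K T"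
    using C_eq K_T_pos by (intro mult_right_mono) (simp_all add: algebra_simps)
  then show "K 0 / (2 * \<epsilon> + 1) \<le> (C - 1) * K T"
    using K_T_pos \<epsilon>_pos by (simp add: c_def)
qed

lemma E_bounds:
  shows E_nonneg: "0 \<le> E" and E_fixed_point: "\<gamma> 0 * L * (K 0 + E) = E"
    and E_le: "E \<le> (C - 1) * K T"
proof -
  define a where "a = \<gamma> 0 * L"
  have a: "0 \<le> a" "2 * a * (1 + \<epsilon>) < 1"
    using gain_bounds by (simp_all add: a_def)
  moreover have "2 * a \<le> 2 * a * (1 + \<epsilon>)"
    using a(1) \<epsilon>_pos by (simp add: algebra_simps)
  ultimately have a_lt: "a < 1 / 2"
    by linarith
  have E_eq: "E = a * K 0 / (1 - a)"
    by (simp add: E_def a_def)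
  show "0 \<le> E"
    unfolding E_eq using a a_lt K_nonneg[of 0] by simp
  show "\<gamma> 0 * L * (K 0 + E) = E"
    unfolding E_eq a_def[symmetric] using a_lt by (simp add: field_simps)
  have "a * (2 * \<epsilon> + 1) \<le> 1 - a"
    using a by (simp add: algebra_simps)
  then have "a / (1 - a) \<le> 1 / (2 * \<epsilon> + 1)"
    using a_lt \<epsilon>_pos by (simp add: field_simps)
  then have "E \<le> K 0 / (2 * \<epsilon> + 1)"
    unfolding E_eq using mult_right_mono[OF _ K_nonneg[of 0]] by fastforce
  then show "E \<le> (C - 1) * K T"
    using K_0_le_C by linarith
qed

definition \<psi> :: "real \<Rightarrow> real" where "\<psi> x = min (C * K_ext x) (K_ext x + E)"

lemma \<psi>_measurable [measurable]: "\<psi> \<in> borel_measurable borel"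
  unfolding \<psi>_def[abs_def] by measurable

lemma \<psi>_bounds: "K_ext x \<le> \<psi> x" "\<psi> x \<le> C * K_ext x" "\<psi> x \<le> K 0 + E"
  using E_nonneg C_ge_1 K_ext_bounds[of x] by (auto simp: \<psi>_def mult_le_cancel_right1)

lemma \<psi>_nonneg: "0 \<le> \<psi> x"
  using \<psi>_bounds(1) K_ext_bounds(1) order_trans by blast

lemma \<psi>_convolution_integrable: "(\<lambda>w. \<psi> (x - w) * K_ext w) integrable_on {0..x}"
  by (rule integrable_on_bounded_borel[where B = "(K 0 + E) * K 0"])
     (use K_nonneg[of 0] E_nonneg in \<open>auto simp: abs_mult \<psi>_nonneg K_ext_bounds intro!: mult_mono \<psi>_bounds\<close>)

lemma \<psi>_convolution_le_E: "\<gamma> 0 * integral {0..x} (\<lambda>w. \<psi> (x - w) * K_ext w) \<le> E"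
proof -
  have "integral {0..x} (\<lambda>w. \<psi> (x - w) * K_ext w) \<le> integral {0..x} (\<lambda>w. (K 0 + E) * K_ext w)"
    using integrable_on_mult_right[OF antimono_integrable_on[OF K_ext_decr K_ext_bounds(1)]]
    by (intro integral_le[OF \<psi>_convolution_integrable]) (auto intro: mult_right_mono \<psi>_bounds K_ext_bounds)
  also have "\<dots> = (K 0 + E) * integral {0..x} K"
    using integral_cong[of "{0..x}" K_ext K] by (simp add: K_ext_eq)
  also have "\<dots> \<le> (K 0 + E) * L"
    using K_nonneg[of 0] E_nonneg by (intro mult_left_mono integral_K_le_L) auto
  finally have "\<gamma> 0 * integral {0..x} (\<lambda>w. \<psi> (x - w) * K_ext w) \<le> \<gamma> 0 * ((K 0 + E) * L)"
    using \<gamma>_nonneg[of 0] by (intro mult_left_mono) auto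
  also have "\<dots> = E"
    using E_fixed_point by (simp add: mult_ac)
  finally show ?thesis .
qed

lemma \<psi>_convolution_le_K:
  assumes x: "0 \<le> x"
  shows "\<gamma> 0 * integral {0..x} (\<lambda>w. \<psi> (x - w) * K_ext w) \<le> (C - 1) * K_ext x"
proof (cases "x > T")
  case True
  have "(\<lambda>w. C * (K_ext (x - w) * K_ext w)) integrable_on {0..x}"
    by (intro integrable_on_mult_right integrable_on_bounded_borel[where B = "K 0 * K 0"])
       (use K_nonneg[of 0] in \<open>auto simp: abs_mult K_ext_bounds intro!: mult_mono K_ext_bounds\<close>)
  then have "integral {0..x} (\<lambda>w. \<psi> (x - w) * K_ext w) \<le> integral {0..x} (\<lambda>w. C * (K_ext (x - w) * K_ext w))"
    by (intro integral_le[OF \<psi>_convolution_integrable])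
       (auto simp: mult.assoc[symmetric] intro: mult_right_mono \<psi>_bounds K_ext_bounds)
  also have "\<dots> = C * integral {0..x} (\<lambda>w. K w * K (x - w))"
    using integral_cong[of "{0..x}" "\<lambda>w. K_ext (x - w) * K_ext w" "\<lambda>w. K w * K (x - w)"]
    by (simp add: K_ext_eq mult.commute)
  also have "\<dots> \<le> C * (2 * (1 + \<epsilon>) * L * K x)"
    using K_convolution[OF True] C_ge_1 by (simp add: L_def)
  finally have "\<gamma> 0 * integral {0..x} (\<lambda>w. \<psi> (x - w) * K_ext w) \<le> \<gamma> 0 * (C * (2 * (1 + \<epsilon>) * L * K x))"
    using \<gamma>_nonneg[of 0] by (intro mult_left_mono) auto
  also have "\<dots> = (C * (2 * (1 + \<epsilon>) * L * \<gamma> 0)) * K x"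
    by (simp add: mult_ac)
  also have "\<dots> \<le> (C - 1) * K x"
    using C_gain K_nonneg[OF x] by (rule mult_right_mono)
  finally show ?thesis
    using x by (simp add: K_ext_eq)
next
  case False
  have "K T \<le> K_ext x"
    using K_decr x False T_pos by (auto simp: K_ext_eq monotone_on_def)
  then have "E \<le> (C - 1) * K_ext x"
    using E_le C_ge_1 by (smt (verit) mult_left_mono)
  then show ?thesis
    using \<psi>_convolution_le_E[of x] by linarith
qed

lemma \<psi>_supersolution:
  assumes "0 \<le> x"
  shows "\<gamma> 0 * integral {0..x} (\<lambda>w. \<psi> (x - w) * K_ext w) \<le> \<psi> x - K_ext x"
proof -
  have "\<psi> x - K_ext x = min ((C - 1) * K_ext x) E"
    by (simp add: \<psi>_def algebra_simps min_diff_distrib_left)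
  then show ?thesis
    using \<psi>_convolution_le_E \<psi>_convolution_le_K[OF assms] by simp
qed

lemma column_bound:
  assumes st: "0 \<le> s" "s \<le> t"
  shows "(\<lambda>u. (\<gamma> u)\<^sup>2 * \<psi> (\<Gamma> t - \<Gamma> u) * K_ext (\<Gamma> u - \<Gamma> s)) integrable_on {s..t}"
    and "integral {s..t} (\<lambda>u. (\<gamma> u)\<^sup>2 * \<psi> (\<Gamma> t - \<Gamma> u) * K_ext (\<Gamma> u - \<Gamma> s))
      \<le> \<psi> (\<Gamma> t - \<Gamma> s) - K_ext (\<Gamma> t - \<Gamma> s)"
proof -
  define x where "x = \<Gamma> t - \<Gamma> s"
  define \<phi> where "\<phi> w = \<psi> (x - w) * K_ext w" for w
  have \<phi>_meas: "\<phi> \<in> borel_measurable borel"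
    unfolding \<phi>_def[abs_def] by measurable
  have \<phi>_bounds: "0 \<le> \<phi> w" "\<phi> w \<le> (K 0 + E) * K 0" for w
    using \<psi>_nonneg K_ext_bounds E_nonneg K_nonneg[of 0] by (auto simp: \<phi>_def intro!: mult_mono \<psi>_bounds)
  have integrand: "(\<gamma> u)\<^sup>2 * \<psi> (\<Gamma> t - \<Gamma> u) * K_ext (\<Gamma> u - \<Gamma> s) = (\<gamma> u)\<^sup>2 * \<phi> (\<Gamma> u - \<Gamma> s)" for u
    by (simp add: \<phi>_def x_def)
  note sq = integral_sq_substitution_le[where \<phi> = \<phi> and B = "(K 0 + E) * K 0", OF st \<phi>_meas \<phi>_bounds]
  show "(\<lambda>u. (\<gamma> u)\<^sup>2 * \<psi> (\<Gamma> t - \<Gamma> u) * K_ext (\<Gamma> u - \<Gamma> s)) integrable_on {s..t}"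
    unfolding integrand using sq(1) by simp
  have "integral {s..t} (\<lambda>u. (\<gamma> u)\<^sup>2 * \<psi> (\<Gamma> t - \<Gamma> u) * K_ext (\<Gamma> u - \<Gamma> s)) \<le> \<gamma> 0 * integral {0..x} \<phi>"
    unfolding integrand x_def by (rule sq(2))
  also have "\<dots> \<le> \<psi> x - K_ext x"
    using \<psi>_supersolution[of x] \<Gamma>_diff_nonneg[OF st(2)] unfolding \<phi>_def[abs_def] x_def by simp
  finally show "integral {s..t} (\<lambda>u. (\<gamma> u)\<^sup>2 * \<psi> (\<Gamma> t - \<Gamma> u) * K_ext (\<Gamma> u - \<Gamma> s))
      \<le> \<psi> (\<Gamma> t - \<Gamma> s) - K_ext (\<Gamma> t - \<Gamma> s)"
    by (simp add: x_def)
qed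

definition \<rho> :: "real \<Rightarrow> real \<Rightarrow> real" where "\<rho> t s = indicator {0..t} s * ((\<gamma> s)\<^sup>2 * R s)"

definition kernel :: "real \<Rightarrow> real \<Rightarrow> real"
  where "kernel u s = (if 0 \<le> s \<and> s \<le> u then K_ext (\<Gamma> u - \<Gamma> s) else 0)"

definition source :: "real \<Rightarrow> real \<Rightarrow> real" where "source t s = indicator {0..t} s * ((\<gamma> s)\<^sup>2 * F (\<Gamma> s))"

definition weight :: "real \<Rightarrow> real \<Rightarrow> real"
  where "weight t u = indicator {0..t} u * ((\<gamma>_ext u)\<^sup>2 * \<psi> (\<Gamma> t - \<Gamma> u))"

lemma weight_nonneg: "0 \<le> weight t u"
  by (simp add: weight_def \<psi>_nonneg)

lemma weight_measurable [measurable]: "weight t \<in> borel_measurable lebesgue"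
  unfolding weight_def by measurable

lemma \<rho>_nonneg: "0 \<le> \<rho> t s"
  using R_nonneg by (simp add: \<rho>_def indicator_def)

lemma source_nonneg: "0 \<le> source t s"
  using F_nonneg[OF \<Gamma>_nonneg] by (simp add: source_def indicator_def)

lemma kernel_nonneg: "0 \<le> kernel u s"
  by (simp add: kernel_def K_ext_bounds)

lemma kernel_measurable [measurable]: "(\<lambda>(u, s). kernel u s) \<in> borel_measurable (lebesgue \<Otimes>\<^sub>M lebesgue)"
  unfolding kernel_def by measurable

lemma \<rho>_measurable [measurable]:
  assumes "0 \<le> t"
  shows "\<rho> t \<in> borel_measurable lebesgue"
proof -
  have [measurable]: "(\<lambda>s. indicator {0..t} s * ((\<gamma> s)\<^sup>2 * K (\<Gamma> t - \<Gamma> s) * R s)) \<in> borel_measurable lebesgue"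
    using nn_integral_lebesgue_indicator_eq_integral(2)[OF R_int[OF assms]] S_integrand_nonneg by auto
  \<comment> \<open>\<open>R\<close> is not assumed measurable: divide the integrand of the equation by the positive kernel.\<close>
  have "\<rho> t s = indicator {0..t} s * ((\<gamma> s)\<^sup>2 * K (\<Gamma> t - \<Gamma> s) * R s) / K_ext (\<Gamma> t - \<Gamma> s)" for s
  proof (cases "s \<in> {0..t}")
    case True
    then have "K_ext (\<Gamma> t - \<Gamma> s) = K (\<Gamma> t - \<Gamma> s)" "K (\<Gamma> t - \<Gamma> s) > 0"
      using K_pos K_ext_eq \<Gamma>_diff_nonneg by auto
    then show ?thesis
      by (simp add: \<rho>_def)
  qed (simp add: \<rho>_def)
  then have "\<rho> t = (\<lambda>s. indicator {0..t} s * ((\<gamma> s)\<^sup>2 * K (\<Gamma> t - \<Gamma> s) * R s) / K_ext (\<Gamma> t - \<Gamma> s))"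
    by (rule ext)
  then show ?thesis
    by simp
qed

lemma nn_integral_kernel_\<rho>:
  assumes "0 \<le> u" "u \<le> t"
  shows "(\<integral>\<^sup>+s. ennreal (kernel u s * \<rho> t s) \<partial>lebesgue) = ennreal (S u)"
proof -
  have "kernel u s * \<rho> t s = indicator {0..u} s * ((\<gamma> s)\<^sup>2 * K (\<Gamma> u - \<Gamma> s) * R s)" for s
    using assms \<Gamma>_diff_nonneg[of s u] by (auto simp: kernel_def \<rho>_def K_ext_eq indicator_def)
  then show ?thesis
    using nn_integral_lebesgue_indicator_eq_integral(1)[OF R_int] S_integrand_nonneg assms
    by (simp add: S_def)
qed

lemma source_measurable [measurable]:
  assumes "0 \<le> t"
  shows "source t \<in> borel_measurable lebesgue"
proof -
  \<comment> \<open>Neither is \<open>F \<circ> \<Gamma>\<close>: recover it from the equation as \<open>R - S\<close>.\<close>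
  have "source t = (\<lambda>s. \<rho> t s - indicator {0..t} s * (\<gamma>_ext s)\<^sup>2
      * enn2real (\<integral>\<^sup>+r. ennreal (kernel s r * \<rho> t r) \<partial>lebesgue))"
    using R_eq_S S_nonneg nn_integral_kernel_\<rho>
    by (auto simp: fun_eq_iff source_def \<rho>_def \<gamma>_ext_eq indicator_def algebra_simps)
  then show ?thesis
    using assms by simp
qed

lemma F_memory_integrable:
  assumes t: "0 \<le> t"
  shows "(\<lambda>s. (\<gamma> s)\<^sup>2 * K (\<Gamma> t - \<Gamma> s) * F (\<Gamma> s)) integrable_on {0..t}"
proof (rule measurable_bounded_by_integrable_imp_integrable[OF _ R_int[OF t]])
  have "(\<lambda>s. K_ext (\<Gamma> t - \<Gamma> s) * source t s) \<in> borel_measurable (lebesgue_on {0..t})"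
    using t by (intro measurable_restrict_space1) measurable
  then show "(\<lambda>s. (\<gamma> s)\<^sup>2 * K (\<Gamma> t - \<Gamma> s) * F (\<Gamma> s)) \<in> borel_measurable (lebesgue_on {0..t})"
    by (rule measurable_cong[THEN iffD1, rotated])
       (use \<Gamma>_diff_nonneg in \<open>auto simp: source_def K_ext_eq\<close>)
  show "norm ((\<gamma> s)\<^sup>2 * K (\<Gamma> t - \<Gamma> s) * F (\<Gamma> s)) \<le> (\<gamma> s)\<^sup>2 * K (\<Gamma> t - \<Gamma> s) * R s"
    if "s \<in> {0..t}" for s
    using that F_nonneg[OF \<Gamma>_nonneg] K_nonneg[OF \<Gamma>_diff_nonneg] R_eq_S S_nonneg
    by (auto intro!: mult_left_mono)
qed simp

lemma nn_integral_\<rho>_K: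
  assumes "0 \<le> t"
  shows "(\<integral>\<^sup>+s. ennreal (\<rho> t s * K_ext (\<Gamma> t - \<Gamma> s)) \<partial>lebesgue) = ennreal (S t)"
proof -
  have "(\<integral>\<^sup>+s. ennreal (\<rho> t s * K_ext (\<Gamma> t - \<Gamma> s)) \<partial>lebesgue)
      = (\<integral>\<^sup>+s. ennreal (kernel t s * \<rho> t s) \<partial>lebesgue)"
    by (rule nn_integral_cong) (simp add: \<rho>_def kernel_def indicator_def mult.commute)
  also have "\<dots> = ennreal (S t)"
    by (rule nn_integral_kernel_\<rho>[OF assms order_refl])
  finally show ?thesis .
qed

lemma nn_integral_weight_kernel_le:
  assumes "0 \<le> s" "s \<le> t"
  shows "(\<integral>\<^sup>+u. ennreal (weight t u) * ennreal (kernel u s) \<partial>lebesgue)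
    \<le> ennreal (\<psi> (\<Gamma> t - \<Gamma> s) - K_ext (\<Gamma> t - \<Gamma> s))"
proof -
  have "ennreal (weight t u) * ennreal (kernel u s)
      = ennreal (indicator {s..t} u * ((\<gamma> u)\<^sup>2 * \<psi> (\<Gamma> t - \<Gamma> u) * K_ext (\<Gamma> u - \<Gamma> s)))" for u
    using assms \<psi>_nonneg K_ext_bounds(1)
    by (auto simp: weight_def kernel_def indicator_def \<gamma>_ext_eq ennreal_mult'[symmetric] mult_ac)
  then show ?thesis
    using nn_integral_lebesgue_indicator_eq_integral(1)[OF column_bound(1)[OF assms]] column_bound(2)[OF assms]
      assms \<psi>_nonneg K_ext_bounds by (simp add: ennreal_leI)
qed

lemma nn_integral_memory_le:
  assumes t: "0 \<le> t"
  shows "(\<integral>\<^sup>+u. ennreal (weight t u) * (\<integral>\<^sup>+s. ennreal (kernel u s * \<rho> t s) \<partial>lebesgue) \<partial>lebesgue)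
    \<le> (\<integral>\<^sup>+s. ennreal (\<rho> t s * (\<psi> (\<Gamma> t - \<Gamma> s) - K_ext (\<Gamma> t - \<Gamma> s))) \<partial>lebesgue)"
proof -
  have "(\<integral>\<^sup>+u. ennreal (weight t u) * (\<integral>\<^sup>+s. ennreal (kernel u s * \<rho> t s) \<partial>lebesgue) \<partial>lebesgue)
      = (\<integral>\<^sup>+u. ennreal (weight t u) * (\<integral>\<^sup>+s. ennreal (kernel u s) * ennreal (\<rho> t s) \<partial>lebesgue) \<partial>lebesgue)"
    by (simp add: ennreal_mult kernel_nonneg \<rho>_nonneg)
  also have "\<dots> \<le> (\<integral>\<^sup>+s. ennreal (\<psi> (\<Gamma> t - \<Gamma> s) - K_ext (\<Gamma> t - \<Gamma> s)) * ennreal (\<rho> t s) \<partial>lebesgue)"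
  proof (rule lebesgue_pair.nn_integral_kernel_le)
    fix s assume "ennreal (\<rho> t s) \<noteq> 0"
    then have "0 \<le> s" "s \<le> t"
      by (cases "s \<in> {0..t}", auto simp: \<rho>_def)+
    then show "(\<integral>\<^sup>+u. ennreal (weight t u) * ennreal (kernel u s) \<partial>lebesgue)
        \<le> ennreal (\<psi> (\<Gamma> t - \<Gamma> s) - K_ext (\<Gamma> t - \<Gamma> s))"
      by (rule nn_integral_weight_kernel_le)
  qed (use t in measurable)
  also have "\<dots> = (\<integral>\<^sup>+s. ennreal (\<rho> t s * (\<psi> (\<Gamma> t - \<Gamma> s) - K_ext (\<Gamma> t - \<Gamma> s))) \<partial>lebesgue)"
    using \<psi>_bounds(1) \<rho>_nonneg by (simp add: ennreal_mult mult.commute)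
  finally show ?thesis .
qed

lemma nn_integral_\<rho>_\<psi>_split:
  assumes t: "0 \<le> t"
  shows "(\<integral>\<^sup>+s. ennreal (\<rho> t s * \<psi> (\<Gamma> t - \<Gamma> s)) \<partial>lebesgue)
    = (\<integral>\<^sup>+s. ennreal (\<rho> t s * (\<psi> (\<Gamma> t - \<Gamma> s) - K_ext (\<Gamma> t - \<Gamma> s))) \<partial>lebesgue) + ennreal (S t)"
proof -
  have "(\<integral>\<^sup>+s. ennreal (\<rho> t s * \<psi> (\<Gamma> t - \<Gamma> s)) \<partial>lebesgue)
      = (\<integral>\<^sup>+s. ennreal (\<rho> t s * (\<psi> (\<Gamma> t - \<Gamma> s) - K_ext (\<Gamma> t - \<Gamma> s)))
          + ennreal (\<rho> t s * K_ext (\<Gamma> t - \<Gamma> s)) \<partial>lebesgue)"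
  proof (rule nn_integral_cong)
    fix s
    have "\<rho> t s * \<psi> (\<Gamma> t - \<Gamma> s)
        = \<rho> t s * (\<psi> (\<Gamma> t - \<Gamma> s) - K_ext (\<Gamma> t - \<Gamma> s)) + \<rho> t s * K_ext (\<Gamma> t - \<Gamma> s)"
      by (simp add: algebra_simps)
    moreover have "0 \<le> \<rho> t s * (\<psi> (\<Gamma> t - \<Gamma> s) - K_ext (\<Gamma> t - \<Gamma> s))" "0 \<le> \<rho> t s * K_ext (\<Gamma> t - \<Gamma> s)"
      using \<psi>_bounds(1) \<rho>_nonneg K_ext_bounds(1) by simp_all
    ultimately show "ennreal (\<rho> t s * \<psi> (\<Gamma> t - \<Gamma> s))
        = ennreal (\<rho> t s * (\<psi> (\<Gamma> t - \<Gamma> s) - K_ext (\<Gamma> t - \<Gamma> s))) + ennreal (\<rho> t s * K_ext (\<Gamma> t - \<Gamma> s))"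
      by (simp add: ennreal_plus)
  qed
  also have "\<dots> = (\<integral>\<^sup>+s. ennreal (\<rho> t s * (\<psi> (\<Gamma> t - \<Gamma> s) - K_ext (\<Gamma> t - \<Gamma> s))) \<partial>lebesgue)
      + (\<integral>\<^sup>+s. ennreal (\<rho> t s * K_ext (\<Gamma> t - \<Gamma> s)) \<partial>lebesgue)"
    using t by (intro nn_integral_add) measurable
  finally show ?thesis
    using nn_integral_\<rho>_K[OF t] by simp
qed

lemma nn_integral_\<rho>_\<psi>_decompose:
  assumes t: "0 \<le> t"
  shows "(\<integral>\<^sup>+s. ennreal (\<rho> t s * \<psi> (\<Gamma> t - \<Gamma> s)) \<partial>lebesgue)
    = (\<integral>\<^sup>+u. ennreal (\<psi> (\<Gamma> t - \<Gamma> u) * source t u) \<partial>lebesgue)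
      + (\<integral>\<^sup>+u. ennreal (weight t u) * (\<integral>\<^sup>+s. ennreal (kernel u s * \<rho> t s) \<partial>lebesgue) \<partial>lebesgue)"
proof -
  have "ennreal (\<rho> t u * \<psi> (\<Gamma> t - \<Gamma> u)) = ennreal (\<psi> (\<Gamma> t - \<Gamma> u) * source t u)
      + ennreal (weight t u) * (\<integral>\<^sup>+s. ennreal (kernel u s * \<rho> t s) \<partial>lebesgue)" for u
  proof (cases "u \<in> {0..t}")
    case True
    then have "\<rho> t u * \<psi> (\<Gamma> t - \<Gamma> u) = \<psi> (\<Gamma> t - \<Gamma> u) * source t u + weight t u * S u"
      using R_eq_S by (simp add: \<rho>_def source_def weight_def \<gamma>_ext_eq algebra_simps)
    moreover have "0 \<le> \<psi> (\<Gamma> t - \<Gamma> u) * source t u" "0 \<le> weight t u * S u"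
      using True \<psi>_nonneg source_nonneg weight_nonneg S_nonneg by simp_all
    ultimately show ?thesis
      using True nn_integral_kernel_\<rho> weight_nonneg S_nonneg by (simp add: ennreal_plus ennreal_mult)
  qed (simp add: \<rho>_def source_def weight_def)
  then have "(\<integral>\<^sup>+s. ennreal (\<rho> t s * \<psi> (\<Gamma> t - \<Gamma> s)) \<partial>lebesgue)
      = (\<integral>\<^sup>+u. ennreal (\<psi> (\<Gamma> t - \<Gamma> u) * source t u)
          + ennreal (weight t u) * (\<integral>\<^sup>+s. ennreal (kernel u s * \<rho> t s) \<partial>lebesgue) \<partial>lebesgue)"
    by simp
  also have "\<dots> = (\<integral>\<^sup>+u. ennreal (\<psi> (\<Gamma> t - \<Gamma> u) * source t u) \<partial>lebesgue)
      + (\<integral>\<^sup>+u. ennreal (weight t u) * (\<integral>\<^sup>+s. ennreal (kernel u s * \<rho> t s) \<partial>lebesgue) \<partial>lebesgue)"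
    using t by (intro nn_integral_add) measurable
  finally show ?thesis .
qed

lemma nn_integral_source_le:
  assumes t: "0 \<le> t"
  shows "(\<integral>\<^sup>+u. ennreal (\<psi> (\<Gamma> t - \<Gamma> u) * source t u) \<partial>lebesgue)
    \<le> ennreal (C * integral {0..t} (\<lambda>s. (\<gamma> s)\<^sup>2 * K (\<Gamma> t - \<Gamma> s) * F (\<Gamma> s)))"
proof -
  have "(\<integral>\<^sup>+u. ennreal (\<psi> (\<Gamma> t - \<Gamma> u) * source t u) \<partial>lebesgue)
      \<le> (\<integral>\<^sup>+u. ennreal C * ennreal (indicator {0..t} u * ((\<gamma> u)\<^sup>2 * K (\<Gamma> t - \<Gamma> u) * F (\<Gamma> u))) \<partial>lebesgue)"
  proof (rule nn_integral_mono)
    fix u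
    have "\<psi> (\<Gamma> t - \<Gamma> u) * source t u \<le> C * (indicator {0..t} u * ((\<gamma> u)\<^sup>2 * K (\<Gamma> t - \<Gamma> u) * F (\<Gamma> u)))"
    proof (cases "u \<in> {0..t}")
      case True
      have "\<psi> (\<Gamma> t - \<Gamma> u) * source t u \<le> C * K_ext (\<Gamma> t - \<Gamma> u) * source t u"
        by (rule mult_right_mono[OF \<psi>_bounds(2) source_nonneg])
      then show ?thesis
        using True \<Gamma>_diff_nonneg[of u t] by (simp add: source_def K_ext_eq mult_ac)
    qed (simp add: source_def)
    then show "ennreal (\<psi> (\<Gamma> t - \<Gamma> u) * source t u)
        \<le> ennreal C * ennreal (indicator {0..t} u * ((\<gamma> u)\<^sup>2 * K (\<Gamma> t - \<Gamma> u) * F (\<Gamma> u)))"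
      using C_ge_1 by (simp add: ennreal_mult'[symmetric] ennreal_leI)
  qed
  also have "\<dots> = ennreal C * ennreal (integral {0..t} (\<lambda>s. (\<gamma> s)\<^sup>2 * K (\<Gamma> t - \<Gamma> s) * F (\<Gamma> s)))"
    using nn_integral_lebesgue_indicator_eq_integral[OF F_memory_integrable[OF t]]
      F_nonneg[OF \<Gamma>_nonneg] K_nonneg[OF \<Gamma>_diff_nonneg]
    by (simp add: nn_integral_cmult)
  finally show ?thesis
    using C_ge_1 by (simp add: ennreal_mult')
qed

lemma nn_integral_\<rho>_excess_le:
  assumes t: "0 \<le> t"
  shows "(\<integral>\<^sup>+s. ennreal (\<rho> t s * (\<psi> (\<Gamma> t - \<Gamma> s) - K_ext (\<Gamma> t - \<Gamma> s))) \<partial>lebesgue) \<le> ennreal ((C - 1) * S t)"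
proof -
  have "(\<integral>\<^sup>+s. ennreal (\<rho> t s * (\<psi> (\<Gamma> t - \<Gamma> s) - K_ext (\<Gamma> t - \<Gamma> s))) \<partial>lebesgue)
      \<le> (\<integral>\<^sup>+s. ennreal (C - 1) * ennreal (\<rho> t s * K_ext (\<Gamma> t - \<Gamma> s)) \<partial>lebesgue)"
  proof (rule nn_integral_mono)
    fix s
    have "\<rho> t s * \<psi> (\<Gamma> t - \<Gamma> s) \<le> \<rho> t s * (C * K_ext (\<Gamma> t - \<Gamma> s))"
      by (rule mult_left_mono[OF \<psi>_bounds(2) \<rho>_nonneg])
    then have "\<rho> t s * (\<psi> (\<Gamma> t - \<Gamma> s) - K_ext (\<Gamma> t - \<Gamma> s)) \<le> (C - 1) * (\<rho> t s * K_ext (\<Gamma> t - \<Gamma> s))"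
      by (simp add: algebra_simps)
    then show "ennreal (\<rho> t s * (\<psi> (\<Gamma> t - \<Gamma> s) - K_ext (\<Gamma> t - \<Gamma> s)))
        \<le> ennreal (C - 1) * ennreal (\<rho> t s * K_ext (\<Gamma> t - \<Gamma> s))"
      using C_ge_1 by (simp add: ennreal_mult'[symmetric] ennreal_leI)
  qed
  also have "\<dots> = ennreal ((C - 1) * S t)"
    using t C_ge_1 by (simp add: nn_integral_cmult nn_integral_\<rho>_K ennreal_mult')
  finally show ?thesis .
qed

lemma S_le:
  assumes t: "0 \<le> t"
  shows "S t \<le> C * integral {0..t} (\<lambda>s. (\<gamma> s)\<^sup>2 * K (\<Gamma> t - \<Gamma> s) * F (\<Gamma> s))"
proof -
  define P where "P = (\<integral>\<^sup>+s. ennreal (\<rho> t s * (\<psi> (\<Gamma> t - \<Gamma> s) - K_ext (\<Gamma> t - \<Gamma> s))) \<partial>lebesgue)"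
  define G where "G = integral {0..t} (\<lambda>s. (\<gamma> s)\<^sup>2 * K (\<Gamma> t - \<Gamma> s) * F (\<Gamma> s))"
  \<comment> \<open>Integrate the equation against \<open>weight t\<close>; by Tonelli and the column bound its memory term is at most \<open>P\<close>.\<close>
  have "P + ennreal (S t) = (\<integral>\<^sup>+s. ennreal (\<rho> t s * \<psi> (\<Gamma> t - \<Gamma> s)) \<partial>lebesgue)"
    unfolding P_def by (rule nn_integral_\<rho>_\<psi>_split[OF t, symmetric])
  also have "\<dots> \<le> ennreal (C * G) + P"
    unfolding nn_integral_\<rho>_\<psi>_decompose[OF t] P_def G_def
    by (rule add_mono[OF nn_integral_source_le[OF t] nn_integral_memory_le[OF t]])
  finally have "P + ennreal (S t) \<le> ennreal (C * G) + P" .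
  moreover have "P \<noteq> \<infinity>"
    using nn_integral_\<rho>_excess_le[OF t] unfolding P_def by (auto simp: top_unique)
  ultimately have "ennreal (S t) \<le> ennreal (C * G)"
    by (simp add: add.commute ennreal_add_left_cancel_le)
  moreover have "0 \<le> G"
    unfolding G_def using F_nonneg[OF \<Gamma>_nonneg] K_nonneg[OF \<Gamma>_diff_nonneg]
    by (intro integral_nonneg[OF F_memory_integrable[OF t]]) auto
  ultimately show ?thesis
    using C_ge_1 by (simp add: G_def)
qed

lemma R_upper_bound:
  assumes "0 \<le> t"
  shows "R t \<le> F (\<Gamma> t) + C * integral {0..t} (\<lambda>s. (\<gamma> s)\<^sup>2 * K (\<Gamma> t - \<Gamma> s) * F (\<Gamma> s))"
  using R_eq_S[OF assms] S_le[OF assms] by simp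

end

theorem lemma14:
  fixes \<gamma> K F R :: "real \<Rightarrow> real" and \<Gamma> :: "real \<Rightarrow> real"
  assumes \<gamma>_nonneg: "\<And>t. t \<ge> 0 \<Longrightarrow> \<gamma> t \<ge> 0"
    and \<gamma>_decr: "antimono_on {0..} \<gamma>"
    and \<Gamma>_def: "\<And>t. \<Gamma> t = integral {0..t} \<gamma>"
    and K_nonneg: "\<And>t. t \<ge> 0 \<Longrightarrow> K t \<ge> 0"
    and K_decr: "antimono_on {0..} K"
    and K_L1: "K integrable_on {0..}"
    and F_nonneg: "\<And>t. t \<ge> 0 \<Longrightarrow> F t \<ge> 0"
    and F_meas: "F measurable_on {0..}"
    and R_nonneg: "\<And>t. t \<ge> 0 \<Longrightarrow> R t \<ge> 0"
    and R_int: "\<And>t. t \<ge> 0 \<Longrightarrow>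
        (\<lambda>s. (\<gamma> s)\<^sup>2 * K (\<Gamma> t - \<Gamma> s) * R s) integrable_on {0..t}"
    and R_eq: "\<And>t. t \<ge> 0 \<Longrightarrow>
        R t = F (\<Gamma> t) + integral {0..t} (\<lambda>s. (\<gamma> s)\<^sup>2 * K (\<Gamma> t - \<Gamma> s) * R s)"
  shows "(\<forall>t\<ge>0. R t \<ge> F (\<Gamma> t) + integral {0..t} (\<lambda>s. (\<gamma> s)\<^sup>2 * K (\<Gamma> t - \<Gamma> s) * F (\<Gamma> s)))
    \<and> (\<forall>\<epsilon> T. \<epsilon> > 0 \<longrightarrow> T > 0 \<longrightarrow>
         (\<forall>t>T. integral {0..t} (\<lambda>s. K s * K (t - s)) \<le> 2 * (1 + \<epsilon>) * integral {0..} K * K t) \<longrightarrow>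
         2 * integral {0..} K * (1 + \<epsilon>) * \<gamma> 0 < 1 \<longrightarrow>
         K T > 0 \<longrightarrow>
         (\<forall>t\<ge>0. R t \<le> F (\<Gamma> t) +
            ((K 0 / (K T * (2 * \<epsilon> + 1)) + 2) * (1 / (1 - 2 * \<gamma> 0 * integral {0..} K * (1 + \<epsilon>))))
            * integral {0..t} (\<lambda>s. (\<gamma> s)\<^sup>2 * K (\<Gamma> t - \<Gamma> s) * F (\<Gamma> s))))"
proof -
  interpret volterra_equation \<gamma> K F R \<Gamma>
    using assms by unfold_locales auto
  show ?thesis
  proof (intro conjI allI impI)
    fix t :: real
    assume "t \<ge> 0"
    then show "R t \<ge> F (\<Gamma> t) + integral {0..t} (\<lambda>s. (\<gamma> s)\<^sup>2 * K (\<Gamma> t - \<Gamma> s) * F (\<Gamma> s))"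
      by (rule R_lower_bound)
  next
    fix \<epsilon> T t :: real
    assume "\<epsilon> > 0" "T > 0"
      "\<forall>t>T. integral {0..t} (\<lambda>s. K s * K (t - s)) \<le> 2 * (1 + \<epsilon>) * integral {0..} K * K t"
      "2 * integral {0..} K * (1 + \<epsilon>) * \<gamma> 0 < 1" "K T > 0"
    then interpret volterra_equation_convolution_bound \<gamma> K F R \<Gamma> \<epsilon> T
      by unfold_locales auto
    assume "t \<ge> 0"
    then show "R t \<le> F (\<Gamma> t) +
        ((K 0 / (K T * (2 * \<epsilon> + 1)) + 2) * (1 / (1 - 2 * \<gamma> 0 * integral {0..} K * (1 + \<epsilon>))))
        * integral {0..t} (\<lambda>s. (\<gamma> s)\<^sup>2 * K (\<Gamma> t - \<Gamma> s) * F (\<Gamma> s))"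
      using R_upper_bound unfolding C_def L_def by blast
  qed
qed

end
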